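(* For $p,q\in\mathbb Z_{\ge2}$, \begin{align*} &(1+(-1)^p)\zeta_2^\sharp(p,q)+(1+(-1)^q)\zeta_2^\sharp(q,p)\\ &=2\sum_{j=0}^{[p/2]}\frac{1}{2^{p+q-2j}}\binom{p+q-1-2j}{q-1}\zeta(2j)\zeta(p+q-2j)+2\sum_{j=0}^{[q/2]}\frac{1}{2^{p+q-2j}}\binom{p+q-1-2j}{p-1}\zeta(2j)\zeta(p+q-2j)-\zeta(p+q). \end{align*}
   Context: $\zeta_2^\sharp(s_1,s_2)=\sum_{m,n=1}^\infty n^{-s_1}(2m+n)^{-s_2}$; $\zeta$ is the Riemann zeta-function (so $\zeta(0)=-1/2$); $[x]$ is the integer part of $x$. *)

theory Defs
  imports "HOL-Analysis.Analysis"
begin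

text \<open>Riemann zeta function at nonnegative integer arguments.
  zeta 0 = -1/2 (value of the analytic continuation); for s >= 2 it is the
  Dirichlet series.  The value at s = 1 (a pole) is never used.\<close>
definition zeta_nat :: "nat \<Rightarrow> real" where
  "zeta_nat s = (if s = 0 then -1/2 else (\<Sum>n. 1 / (real (Suc n)) ^ s))"

definition zeta2_sharp :: "nat \<Rightarrow> nat \<Rightarrow> real" where
  "zeta2_sharp s1 s2 =
     infsum (\<lambda>(m,n). 1 / ((real n) ^ s1 * (real (2*m + n)) ^ s2))
            ({1..} \<times> {1..})"

end

theory Submission
  imports Defs
begin

text \<open>Writing the lattice points of the two triangles u < v and v < u as (u, v) = (m, m + n) and
  (m + n, m), the summand n^(-a) (2m + n)^(-b) of zeta2_sharp(a, b) becomes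
  (u - v)^(-a) (u + v)^(-b), up to the sign (-1)^a on the first triangle. So the left-hand
  side is the sum of (u - v)^(-p) (u + v)^(-q) + (u - v)^(-q) (u + v)^(-p) over all
  u \<noteq> v. Partial fractions in x = u - v and y = u + v, whose sum x + y = 2u does not depend on v,
  turn each summand into a combination of (2u)^(i-p-q) (x^(-i) + y^(-i)). Summing over v
  first gives (1 + (-1)^i) \<zeta>(i) - (1 + 2^(-i)) u^(-i) by telescoping, and summing over u then
  gives products of zeta values. Only even i survive; the leftover multiples of \<zeta>(p + q) are
  collected with the hockey-stick identity and the partial fraction expansion at x = y = 1.\<close>

section \<open>Partial fractions\<close>

lemma sum_binomial_shift_diff:
  fixes b :: "'a::comm_ring_1"
  shows "(\<Sum>k\<le>Q. of_nat (Suc P + k choose k) * b^k) - (\<Sum>k\<le>Q. of_nat (P + k choose k) * b^k)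
         = b * (\<Sum>k<Q. of_nat (Suc P + k choose k) * b^k)"
proof (induction Q)
  case (Suc Q)
  have "of_nat (Suc P + Suc Q choose Suc Q)
      = (of_nat (P + Suc Q choose Suc Q) + of_nat (Suc P + Q choose Q) :: 'a)"
    by (simp add: add.commute)
  with Suc show ?case by (simp add: algebra_simps)
qed simp

lemma negative_binomial_identity:
  fixes a b :: "'a::comm_ring_1"
  assumes "a + b = 1"
  shows "b^Suc Q * (\<Sum>k\<le>P. of_nat (Q + k choose k) * a^k)
       + a^Suc P * (\<Sum>k\<le>Q. of_nat (P + k choose k) * b^k) = 1"
proof -
  have a: "a = 1 - b" using assms by (simp add: algebra_simps)
  show ?thesis
  proof (induction P)
    case 0
    show ?case using one_diff_power_eq[of b "Suc Q"]
      by (simp add: a lessThan_Suc_atMost) (metis add.commute diff_add_cancel)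
  next
    case (Suc P)
    define B where "B P' = (\<Sum>k\<le>Q. of_nat (P' + k choose k) * b^k)" for P'
    define X where "X = (\<Sum>k<Q. of_nat (Suc P + k choose k) * b^k)"
    define c where "c = (of_nat (Suc P + Q choose Q) :: 'a)"
    have "B (Suc P) = X + c * b^Q"
      unfolding B_def X_def c_def by (simp flip: lessThan_Suc_atMost)
    moreover have "B P = B (Suc P) - b * X"
      using sum_binomial_shift_diff[where b=b and P=P and Q=Q] unfolding B_def X_def
      by (simp add: algebra_simps)
    moreover have "of_nat (Q + Suc P choose Suc P) = c"
      unfolding c_def by (metis add.commute binomial_symmetric add_diff_cancel_left' le_add2)
    ultimately have step: "b^Suc Q * of_nat (Q + Suc P choose Suc P) + a * B (Suc P) = B P"
      by (simp add: a algebra_simps)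
    have "b^Suc Q * (\<Sum>k\<le>Suc P. of_nat (Q + k choose k) * a^k) + a^Suc (Suc P) * B (Suc P)
       = b^Suc Q * (\<Sum>k\<le>P. of_nat (Q + k choose k) * a^k)
         + a^Suc P * (b^Suc Q * of_nat (Q + Suc P choose Suc P) + a * B (Suc P))"
      by (simp add: algebra_simps)
    also have "\<dots> = 1" unfolding step unfolding B_def by (rule Suc)
    finally show ?case unfolding B_def .
  qed
qed

lemma choose_complement_shift:
  assumes "i \<le> p" "1 \<le> q"
  shows "(p + q - 1 - i) choose (q - 1) = (q - 1 + (p - i)) choose (p - i)"
  using assms binomial_symmetric[of "p - i" "q - 1 + (p - i)"] by (simp add: add.commute)

definition pf_coeff :: "nat \<Rightarrow> nat \<Rightarrow> nat \<Rightarrow> real" where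
  "pf_coeff p q i = real ((p + q - 1 - i) choose (q - 1))"

text \<open>With s = x + y, \<open>pf_part p q s x\<close> consists of the terms of the partial fraction
  expansion of 1/(x^p y^q) that have a pole at x = 0.\<close>

definition pf_part :: "nat \<Rightarrow> nat \<Rightarrow> real \<Rightarrow> real \<Rightarrow> real" where
  "pf_part p q s x = (\<Sum>i=1..p. pf_coeff p q i / (s^(p + q - i) * x^i))"

lemma pf_part_eq_binomial_sum:
  assumes "x \<noteq> 0" "s \<noteq> 0" "1 \<le> p" "1 \<le> q"
  shows "pf_part p q s x = (\<Sum>k\<le>p - 1. real (q - 1 + k choose k) * (x/s)^k) / (s^q * x^p)"
proof -
  have "pf_coeff p q i / (s^(p + q - i) * x^i)
      = real (q - 1 + (p - i) choose (p - i)) * (x/s)^(p - i) / (s^q * x^p)"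
    if i: "i \<in> {1..p}" for i
  proof -
    have "x^p = x^(p - i) * x^i" using i by (simp flip: power_add)
    moreover have "s^(p + q - i) = s^q * s^(p - i)" using i by (simp add: add.commute flip: power_add)
    moreover have "pf_coeff p q i = real (q - 1 + (p - i) choose (p - i))"
      using i assms choose_complement_shift[of i p q] unfolding pf_coeff_def by simp
    ultimately show ?thesis using assms by (simp add: field_simps)
  qed
  then show ?thesis
    unfolding pf_part_def sum_divide_distrib
    by (intro sum.reindex_bij_witness[of _ "\<lambda>k. p - k" "\<lambda>i. p - i"]) (use assms in auto)
qed

lemma partial_fractions:
  fixes x y :: real
  assumes "x \<noteq> 0" "y \<noteq> 0" "x + y \<noteq> 0" "1 \<le> p" "1 \<le> q"
  shows "1 / (x^p * y^q) = pf_part p q (x + y) x + pf_part q p (x + y) y"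
proof -
  obtain P Q where P: "p = Suc P" and Q: "q = Suc Q"
    using assms by (metis Suc_pred' less_eq_Suc_le One_nat_def)
  define s where "s = x + y"
  have s: "s \<noteq> 0" using assms s_def by simp
  have "x/s + y/s = 1" using s unfolding s_def by (simp add: add_divide_distrib[symmetric])
  from negative_binomial_identity[OF this, where P=P and Q=Q]
  have "1 / (x^p * y^q) = ((y/s)^q * (\<Sum>k\<le>P. real (Q + k choose k) * (x/s)^k)
       + (x/s)^p * (\<Sum>k\<le>Q. real (P + k choose k) * (y/s)^k)) / (x^p * y^q)"
    by (simp add: P Q)
  also have "\<dots> = (\<Sum>k\<le>P. real (Q + k choose k) * (x/s)^k) / (s^q * x^p)
       + (\<Sum>k\<le>Q. real (P + k choose k) * (y/s)^k) / (s^p * y^q)"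
    using assms s by (simp add: field_simps power_divide)
  also have "\<dots> = pf_part p q s x + pf_part q p s y"
    using assms s by (simp add: pf_part_eq_binomial_sum P Q)
  finally show ?thesis unfolding s_def .
qed

section \<open>Sums of inverse powers\<close>

lemma has_sum_sum:
  fixes f :: "'i \<Rightarrow> 'a \<Rightarrow> 'b::topological_comm_monoid_add"
  assumes "finite I" "\<And>i. i \<in> I \<Longrightarrow> (f i has_sum s i) A"
  shows "((\<lambda>x. \<Sum>i\<in>I. f i x) has_sum (\<Sum>i\<in>I. s i)) A"
  using assms by (induction I rule: finite_induct) (simp_all add: has_sum_add)

lemma has_sum_diff:
  fixes f g :: "'a \<Rightarrow> 'b::topological_ab_group_add"
  assumes "(f has_sum a) A" "(g has_sum b) A"
  shows "((\<lambda>x. f x - g x) has_sum (a - b)) A"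
proof -
  have "((\<lambda>x. - g x) has_sum - b) A" using assms(2) by (simp add: has_sum_uminus)
  from has_sum_add[OF assms(1) this] show ?thesis by simp
qed

lemma has_sum_zeta_nat_Suc:
  assumes "2 \<le> k"
  shows "((\<lambda>n::nat. 1 / real (Suc n) ^ k) has_sum zeta_nat k) UNIV"
proof (rule sums_nonneg_imp_has_sum)
  have "summable (\<lambda>n::nat. 1 / real (Suc n) ^ k)"
    using inverse_power_summable[OF assms] summable_Suc_iff[of "\<lambda>n. inverse (real n ^ k)"]
    by (simp add: divide_inverse)
  then show "(\<lambda>n::nat. 1 / real (Suc n) ^ k) sums zeta_nat k"
    using assms unfolding zeta_nat_def by (simp add: summable_sums)
qed simp

lemma has_sum_zeta_nat:
  assumes "2 \<le> k"
  shows "((\<lambda>n::nat. 1 / real n ^ k) has_sum zeta_nat k) {1..}"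
  using has_sum_zeta_nat_Suc[OF assms]
  by (subst (asm) has_sum_reindex_bij_witness[where j=Suc and i="\<lambda>n. n - 1" and T="{1..}"]) auto

lemma has_sum_diff_shift:
  fixes f :: "nat \<Rightarrow> real"
  assumes "f \<longlonglongrightarrow> 0" "decseq f"
  shows "((\<lambda>n. f n - f (n + a)) has_sum (\<Sum>k<a. f k)) UNIV"
proof (rule sums_nonneg_imp_has_sum)
  have "(\<lambda>n. f (n + k) - f (Suc (n + k))) sums f k" for k
    using telescope_sums'[OF LIMSEQ_ignore_initial_segment[OF assms(1), of k]] by simp
  then have "(\<lambda>n. \<Sum>k<a. f (n + k) - f (Suc (n + k))) sums (\<Sum>k<a. f k)"
    by (rule sums_sum)
  moreover have "(\<Sum>k<a. f (n + k) - f (Suc (n + k))) = f n - f (n + a)" for n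
    using sum_lessThan_telescope'[of "\<lambda>k. f (n + k)" a] by simp
  ultimately show "(\<lambda>n. f n - f (n + a)) sums (\<Sum>k<a. f k)" by simp
  show "0 \<le> f n - f (n + a)" for n
    using decseqD[OF assms(2), of n "n + a"] by simp
qed

text \<open>For i = 1 the value \<open>zeta_nat 1\<close> is junk, but its factor 1 + (-1)^i vanishes.\<close>

definition row_sum :: "nat \<Rightarrow> nat \<Rightarrow> real" where
  "row_sum i u = (1 + (-1)^i) * zeta_nat i - (1 + 1/2^i) / real u^i"

lemma sum_row_below_diagonal:
  assumes "1 \<le> u"
  shows "(\<Sum>v\<in>{1..<u}. 1/(real u - real v)^i + 1/(real u + real v)^i)
       = (\<Sum>k<2*u. 1/real (Suc k)^i) - 1/real u^i - 1/(2*real u)^i"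
proof -
  define F where "F k = 1/real k^i" for k :: nat
  have below: "(\<Sum>v\<in>{1..<u}. 1/(real u - real v)^i) = (\<Sum>k\<in>{1..<u}. F k)"
    unfolding F_def
    by (rule sum.reindex_bij_witness[of _ "\<lambda>k. u - k" "\<lambda>v. u - v"]) (auto simp: of_nat_diff)
  have above: "(\<Sum>v\<in>{1..<u}. 1/(real u + real v)^i) = (\<Sum>k\<in>{Suc u..<2*u}. F k)"
    unfolding F_def
    by (rule sum.reindex_bij_witness[of _ "\<lambda>k. k - u" "\<lambda>v. u + v"]) auto
  have "(\<Sum>k<2*u. 1/real (Suc k)^i) = (\<Sum>k\<in>{1..<Suc (2*u)}. F k)"
    unfolding F_def by (rule sum.reindex_bij_witness[of _ "\<lambda>k. k - 1" Suc]) auto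
  also have "\<dots> = (\<Sum>k\<in>{1..<u}. F k) + (\<Sum>k\<in>{u..<Suc (2*u)}. F k)"
    using assms by (simp add: sum.atLeastLessThan_concat)
  also have "(\<Sum>k\<in>{u..<Suc (2*u)}. F k) = F u + (\<Sum>k\<in>{Suc u..<2*u}. F k) + F (2*u)"
    using assms by (simp add: sum.atLeast_Suc_lessThan sum.atLeastLessThan_Suc)
  finally show ?thesis using below above by (simp add: F_def sum.distrib)
qed

lemma has_sum_row_tail:
  assumes "1 \<le> u" "1 \<le> i"
  shows "((\<lambda>v. 1/(real u - real v)^i + 1/(real u + real v)^i) has_sum
          ((1 + (-1)^i) * zeta_nat i - (\<Sum>k<2*u. 1/real (Suc k)^i))) {u<..}"
proof -
  define f where "f n = 1/real (Suc n)^i" for n :: nat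
  have "(\<lambda>n. inverse (real (Suc n)) ^ i) \<longlonglongrightarrow> 0 ^ i"
    by (intro tendsto_power LIMSEQ_inverse_real_of_nat)
  then have "f \<longlonglongrightarrow> 0"
    using assms(2) unfolding f_def by (cases i) (simp_all add: power_inverse divide_inverse)
  moreover have "decseq f"
    unfolding f_def by (intro decseq_SucI) (simp add: frac_le power_mono)
  ultimately have telescope: "((\<lambda>n. f n - f (n + 2*u)) has_sum (\<Sum>k<2*u. f k)) UNIV"
    by (rule has_sum_diff_shift)
  have zeta: "((\<lambda>n. (1 + (-1)^i) * f n) has_sum ((1 + (-1)^i) * zeta_nat i)) UNIV"
  proof (cases "even i")
    case True
    with assms(2) have "2 \<le> i" by presburger
    from has_sum_cmult_right[OF has_sum_zeta_nat_Suc[OF this]] show ?thesis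
      unfolding f_def .
  qed simp
  have "1/(real u - real (u + Suc n))^i + 1/(real u + real (u + Suc n))^i
      = (1 + (-1)^i) * f n - (f n - f (n + 2*u))" for n
    \<comment> \<open>the summand at v = u + n + 1 is (-1)^i f n + f (n + 2u)\<close>
  proof -
    have diff: "real u - real (u + Suc n) = - real (Suc n)"
      and sum: "real u + real (u + Suc n) = real (Suc (n + 2*u))"
      by simp_all
    show ?thesis
      unfolding f_def diff sum power_minus[of "real (Suc n)"] by (cases "even i") simp_all
  qed
  with has_sum_diff[OF zeta telescope]
  have "((\<lambda>n. 1/(real u - real (u + Suc n))^i + 1/(real u + real (u + Suc n))^i) has_sum
          ((1 + (-1)^i) * zeta_nat i - (\<Sum>k<2*u. f k))) UNIV"
    by simp
  then show ?thesis unfolding f_def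
    by (subst (asm) has_sum_reindex_bij_witness[where j="\<lambda>n. u + Suc n" and i="\<lambda>v. v - u - 1"
          and T="{u<..}"]) auto
qed

lemma has_sum_row:
  assumes "1 \<le> u" "1 \<le> i"
  shows "((\<lambda>v. 1/(real u - real v)^i + 1/(real u + real v)^i) has_sum row_sum i u) ({1..} - {u})"
proof -
  define g where "g v = 1/(real u - real v)^i + 1/(real u + real v)^i" for v :: nat
  have "(g has_sum sum g {1..<u}) {1..<u}" by (rule has_sum_finiteI) auto
  moreover have "{1..<u} \<inter> {u<..} = {}" by auto
  ultimately have "(g has_sum (sum g {1..<u} + ((1 + (-1)^i) * zeta_nat i - (\<Sum>k<2*u. 1/real (Suc k)^i))))
      ({1..<u} \<union> {u<..})"
    using has_sum_Un_disjoint has_sum_row_tail[OF assms, folded g_def] by blast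
  moreover have "{1..<u} \<union> {u<..} = {1..} - {u}" by auto
  moreover have "sum g {1..<u} + ((1 + (-1)^i) * zeta_nat i - (\<Sum>k<2*u. 1/real (Suc k)^i))
      = row_sum i u"
    unfolding row_sum_def g_def sum_row_below_diagonal[OF assms(1)]
    by (simp add: power_mult_distrib add_divide_distrib)
  ultimately show ?thesis unfolding g_def by simp
qed

section \<open>The double series as a sum over the off-diagonal lattice points\<close>

lemma zeta2_sharp_summable:
  assumes "2 \<le> a" "2 \<le> b"
  shows "(\<lambda>(m, n). 1 / (real n ^ a * real (2*m + n) ^ b)) summable_on ({1::nat..} \<times> {1::nat..})"
proof (rule summable_on_comparison_test)
  show "(\<lambda>(m::nat, n::nat). 1 / real m^2 * (1 / real n^2)) summable_on ({1..} \<times> {1..})"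
  proof (rule summable_on_SigmaI[where g="\<lambda>m. 1 / real m^2 * zeta_nat 2"])
    show "((\<lambda>n. case (m, n) of (m, n) \<Rightarrow> 1 / real m^2 * (1 / real n^2)) has_sum
        1 / real m^2 * zeta_nat 2) {1..}" for m
      using has_sum_cmult_right[OF has_sum_zeta_nat[of 2], of "1 / real m^2"] by simp
    show "(\<lambda>m. 1 / real m^2 * zeta_nat 2) summable_on {1..}"
      using has_sum_cmult_left[OF has_sum_zeta_nat[of 2]] summable_on_def by fastforce
  qed auto
next
  fix x :: "nat \<times> nat" assume "x \<in> {1..} \<times> {1..}"
  then obtain m n where x: "x = (m, n)" and m: "1 \<le> m" and n: "1 \<le> n" by auto
  have "real n^2 \<le> real n^a" using n assms by (intro power_increasing) auto
  moreover have "real m^2 \<le> real (2*m + n)^b"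
  proof -
    have "real m^2 \<le> real (2*m + n)^2" by (intro power_mono) auto
    also have "\<dots> \<le> real (2*m + n)^b" using m assms by (intro power_increasing) auto
    finally show ?thesis .
  qed
  ultimately have "real m^2 * real n^2 \<le> real n^a * real (2*m + n)^b"
    by (metis mult.commute mult_mono zero_le_power2 of_nat_0_le_iff zero_le_power)
  then show "(case x of (m, n) \<Rightarrow> 1 / (real n ^ a * real (2*m + n) ^ b))
      \<le> (case x of (m, n) \<Rightarrow> 1 / real m^2 * (1 / real n^2))"
    using m n unfolding x by (simp add: frac_le)
qed auto

lemma has_sum_zeta2_sharp:
  assumes "2 \<le> a" "2 \<le> b"
  shows "((\<lambda>(m, n). 1 / (real n ^ a * real (2*m + n) ^ b)) has_sum zeta2_sharp a b)
    ({1::nat..} \<times> {1::nat..})"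
  unfolding zeta2_sharp_def using zeta2_sharp_summable[OF assms] by (rule has_sum_infsum)

definition zeta2_kernel :: "nat \<Rightarrow> nat \<Rightarrow> nat \<times> nat \<Rightarrow> real" where
  "zeta2_kernel a b = (\<lambda>(u, v). 1 / ((real u - real v)^a * (real u + real v)^b))"

lemma has_sum_zeta2_kernel_above_diagonal:
  assumes "2 \<le> a" "2 \<le> b"
  shows "(zeta2_kernel a b has_sum ((-1)^a * zeta2_sharp a b)) {(u, v). 1 \<le> u \<and> u < v}"
proof -
  have "zeta2_kernel a b (m, m + n) = (-1)^a * (1 / (real n ^ a * real (2*m + n) ^ b))" for m n
  proof -
    have "real m - real (m + n) = - real n" "real m + real (m + n) = real (2*m + n)" by simp_all
    then show ?thesis unfolding zeta2_kernel_def by (cases "even a") (simp_all add: power_minus[of "real n"])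
  qed
  then show ?thesis
    using has_sum_cmult_right[OF has_sum_zeta2_sharp[OF assms], of "(-1)^a"]
    by (subst (asm) has_sum_reindex_bij_witness[where j="\<lambda>(m, n). (m, m + n)"
          and i="\<lambda>(u, v). (u, v - u)" and T="{(u, v). 1 \<le> u \<and> u < v}" and h="zeta2_kernel a b"])
      auto
qed

lemma has_sum_zeta2_kernel_below_diagonal:
  assumes "2 \<le> a" "2 \<le> b"
  shows "(zeta2_kernel a b has_sum zeta2_sharp a b) {(u, v). 1 \<le> v \<and> v < u}"
proof -
  have "zeta2_kernel a b (m + n, m) = 1 / (real n ^ a * real (2*m + n) ^ b)" for m n
  proof -
    have "real (m + n) - real m = real n" "real (m + n) + real m = real (2*m + n)" by simp_all
    then show ?thesis unfolding zeta2_kernel_def by simp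
  qed
  then show ?thesis
    using has_sum_zeta2_sharp[OF assms]
    by (subst (asm) has_sum_reindex_bij_witness[where j="\<lambda>(m, n). (m + n, m)"
          and i="\<lambda>(u, v). (v, u - v)" and T="{(u, v). 1 \<le> v \<and> v < u}" and h="zeta2_kernel a b"])
      auto
qed

lemma has_sum_zeta2_kernel_off_diagonal:
  assumes "2 \<le> p" "2 \<le> q"
  shows "((\<lambda>x. zeta2_kernel p q x + zeta2_kernel q p x) has_sum
      ((1 + (-1)^p) * zeta2_sharp p q + (1 + (-1)^q) * zeta2_sharp q p)) (SIGMA u:{1..}. {1..} - {u})"
proof -
  have "(SIGMA u:{1..}. {1..} - {u})
      = {(u::nat, v). 1 \<le> u \<and> u < v} \<union> {(u, v). 1 \<le> v \<and> v < u}"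
    by auto
  moreover have "{(u::nat, v). 1 \<le> u \<and> u < v} \<inter> {(u, v). 1 \<le> v \<and> v < u} = {}" by auto
  ultimately have "(zeta2_kernel a b has_sum ((-1)^a * zeta2_sharp a b + zeta2_sharp a b))
      (SIGMA u:{1..}. {1..} - {u})" if "2 \<le> a" "2 \<le> b" for a b
    using has_sum_Un_disjoint[OF has_sum_zeta2_kernel_above_diagonal[OF that]
        has_sum_zeta2_kernel_below_diagonal[OF that]] by simp
  from has_sum_add[OF this[OF assms] this[OF assms(2,1)]] show ?thesis
    by (simp add: algebra_simps)
qed

section \<open>Summation over v, then over u\<close>

definition row_total :: "nat \<Rightarrow> nat \<Rightarrow> nat \<Rightarrow> real" where
  "row_total p q u = (\<Sum>i=1..p. pf_coeff p q i / (2 * real u)^(p + q - i) * row_sum i u)"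

lemma has_sum_pf_part_row:
  assumes "1 \<le> u"
  shows "((\<lambda>v. pf_part p q (2 * real u) (real u - real v) + pf_part p q (2 * real u) (real u + real v))
      has_sum row_total p q u) ({1..} - {u})"
proof -
  have "((\<lambda>v. \<Sum>i=1..p. pf_coeff p q i / (2 * real u)^(p + q - i) *
      (1/(real u - real v)^i + 1/(real u + real v)^i)) has_sum row_total p q u) ({1..} - {u})"
    unfolding row_total_def
    by (intro has_sum_sum has_sum_cmult_right has_sum_row) (use assms in auto)
  then show ?thesis
    unfolding pf_part_def by (simp add: sum.distrib distrib_left)
qed

lemma zeta2_kernel_pf_parts:
  assumes "1 \<le> p" "1 \<le> q" "1 \<le> u" "v \<noteq> u"
  defines "x \<equiv> real u - real v" and "y \<equiv> real u + real v"
  shows "zeta2_kernel p q (u, v) + zeta2_kernel q p (u, v)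
    = (pf_part p q (2 * real u) x + pf_part p q (2 * real u) y)
    + (pf_part q p (2 * real u) x + pf_part q p (2 * real u) y)"
proof -
  have "x \<noteq> 0" "y \<noteq> 0" "x + y = 2 * real u" "x + y \<noteq> 0"
    using assms unfolding x_def y_def by auto
  with partial_fractions[of x y p q] partial_fractions[of x y q p] assms(1,2)
  have "1 / (x^p * y^q) + 1 / (x^q * y^p)
    = (pf_part p q (2 * real u) x + pf_part p q (2 * real u) y)
    + (pf_part q p (2 * real u) x + pf_part q p (2 * real u) y)"
    by simp
  then show ?thesis unfolding zeta2_kernel_def x_def y_def by simp
qed

definition pf_total :: "nat \<Rightarrow> nat \<Rightarrow> real" where
  "pf_total p q = (\<Sum>i=1..p. pf_coeff p q i / 2^(p + q - i) *
      ((1 + (-1)^i) * zeta_nat i * zeta_nat (p + q - i) - (1 + 1/2^i) * zeta_nat (p + q)))"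

lemma has_sum_row_total:
  assumes "1 \<le> p" "2 \<le> q"
  shows "(row_total p q has_sum pf_total p q) {1..}"
  unfolding row_total_def pf_total_def
proof (rule has_sum_sum, simp)
  fix i assume i: "i \<in> {1..p}"
  define c where "c = pf_coeff p q i / 2^(p + q - i)"
  define g where "g u = c * ((1 + (-1)^i) * zeta_nat i * (1 / real u^(p + q - i))
      - (1 + 1/2^i) * (1 / real u^(p + q)))" for u :: nat
  have sum: "(g has_sum c * ((1 + (-1)^i) * zeta_nat i * zeta_nat (p + q - i)
      - (1 + 1/2^i) * zeta_nat (p + q))) {1..}"
  proof -
    have "2 \<le> p + q - i" "2 \<le> p + q" using i assms by auto
    note zeta = has_sum_cmult_right[OF has_sum_zeta_nat[OF this(1)]]
      has_sum_cmult_right[OF has_sum_zeta_nat[OF this(2)]]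
    show ?thesis unfolding g_def by (rule has_sum_cmult_right[OF has_sum_diff[OF zeta]])
  qed
  have eq: "pf_coeff p q i / (2 * real u)^(p + q - i) * row_sum i u = g u"
    if "u \<in> {1..}" for u :: nat
  proof -
    define A where "A = (1 + (-1)^i) * zeta_nat i"
    define B where "B = (1 + 1/2^i :: real)"
    have "real u^(p + q) = real u^(p + q - i) * real u^i"
      using i by (simp flip: power_add)
    moreover have "(2 * real u)^(p + q - i) = 2^(p + q - i) * real u^(p + q - i)"
      by (simp add: power_mult_distrib)
    ultimately show ?thesis
      using that unfolding c_def g_def row_sum_def A_def[symmetric] B_def[symmetric]
      by (simp add: field_simps)
  qed
  show "((\<lambda>u. pf_coeff p q i / (2 * real u)^(p + q - i) * row_sum i u) has_sum
      (pf_coeff p q i / 2^(p + q - i) *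
        ((1 + (-1)^i) * zeta_nat i * zeta_nat (p + q - i) - (1 + 1/2^i) * zeta_nat (p + q)))) {1..}"
    unfolding c_def[symmetric] by (rule has_sum_cong[THEN iffD2, OF eq sum])
qed

lemma zeta2_sharp_parity_sum_eq_pf_total:
  assumes "2 \<le> p" "2 \<le> q"
  shows "(1 + (-1)^p) * zeta2_sharp p q + (1 + (-1)^q) * zeta2_sharp q p = pf_total p q + pf_total q p"
proof -
  have "((\<lambda>v. zeta2_kernel p q (u, v) + zeta2_kernel q p (u, v)) has_sum
      (row_total p q u + row_total q p u)) ({1..} - {u})" if "u \<in> {1..}" for u
    using has_sum_add[OF has_sum_pf_part_row has_sum_pf_part_row] that assms
    by (subst has_sum_cong[OF zeta2_kernel_pf_parts]) auto
  from has_sum_Sigma'[OF has_sum_zeta2_kernel_off_diagonal[OF assms] this]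
  have "((\<lambda>u. row_total p q u + row_total q p u) has_sum
      ((1 + (-1)^p) * zeta2_sharp p q + (1 + (-1)^q) * zeta2_sharp q p)) {1..}" .
  moreover have "((\<lambda>u. row_total p q u + row_total q p u) has_sum (pf_total p q + pf_total q p)) {1..}"
    using assms by (intro has_sum_add has_sum_row_total) auto
  ultimately show ?thesis by (rule has_sum_unique)
qed

section \<open>Collecting the zeta values\<close>

lemma sum_one_plus_neg_one_power:
  fixes G :: "nat \<Rightarrow> 'a::comm_ring_1"
  shows "(\<Sum>i=1..n. (1 + (-1)^i) * G i) = 2 * (\<Sum>j=1..n div 2. G (2*j))"
proof (induction n)
  case (Suc n)
  show ?case
  proof (cases "even (Suc n)")
    case True
    then have "Suc n div 2 = Suc (n div 2)" "2 * Suc (n div 2) = Suc n" by presburger+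
    with Suc True show ?thesis by (simp add: algebra_simps)
  next
    case False
    then have "Suc n div 2 = n div 2" by presburger
    with Suc False show ?thesis by simp
  qed
qed simp

lemma sum_pf_coeff:
  assumes "1 \<le> p" "1 \<le> q"
  shows "(\<Sum>i=1..p. pf_coeff p q i) = real (p + q - 1 choose (p - 1))"
proof -
  have "(\<Sum>i=1..p. pf_coeff p q i) = real (\<Sum>k\<le>p - 1. q - 1 + k choose k)"
    unfolding pf_coeff_def of_nat_sum
    by (rule sum.reindex_bij_witness[of _ "\<lambda>k. p - k" "\<lambda>i. p - i"])
      (use assms choose_complement_shift in auto)
  also have "(\<Sum>k\<le>p - 1. q - 1 + k choose k) = Suc (q - 1 + (p - 1)) choose (p - 1)"
    by (rule sum_choose_lower)
  also have "Suc (q - 1 + (p - 1)) = p + q - 1"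
    using assms by simp
  finally show ?thesis .
qed

lemma pf_part_two_one:
  assumes "1 \<le> p" "1 \<le> q"
  shows "pf_part p q 2 1 + pf_part q p 2 1 = 1"
  using partial_fractions[of 1 1 p q] assms by simp

lemma pf_total_eq:
  assumes "1 \<le> p" "1 \<le> q"
  shows "pf_total p q = 2 * (\<Sum>j=1..p div 2. pf_coeff p q (2*j) / 2^(p + q - 2*j)
          * zeta_nat (2*j) * zeta_nat (p + q - 2*j))
      - zeta_nat (p + q) * pf_part p q 2 1 - zeta_nat (p + q) * real (p + q - 1 choose (p - 1)) / 2^(p + q)"
proof -
  define Z where "Z = zeta_nat (p + q)"
  define a where "a i = pf_coeff p q i / 2^(p + q - i)" for i
  have "pf_total p q = (\<Sum>i=1..p. (1 + (-1)^i) * (a i * zeta_nat i * zeta_nat (p + q - i)))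
      - Z * (\<Sum>i=1..p. a i) - Z * (\<Sum>i=1..p. a i / 2^i)"
  proof -
    have "a i * ((1 + (-1)^i) * zeta_nat i * zeta_nat (p + q - i) - (1 + 1/2^i) * Z)
      = (1 + (-1)^i) * (a i * zeta_nat i * zeta_nat (p + q - i)) - Z * a i - Z * (a i / 2^i)" for i
      by (simp add: field_simps)
    then show ?thesis
      unfolding pf_total_def a_def[symmetric] Z_def[symmetric]
      by (simp add: sum_subtractf sum_distrib_left)
  qed
  also have "(\<Sum>i=1..p. a i / 2^i) = (\<Sum>i=1..p. pf_coeff p q i / 2^(p + q))"
    unfolding a_def by (intro sum.cong refl) (simp add: divide_divide_eq_left flip: power_add)
  also have "\<dots> = real (p + q - 1 choose (p - 1)) / 2^(p + q)"
    by (simp only: sum_divide_distrib[symmetric] sum_pf_coeff[OF assms])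
  also have "(\<Sum>i=1..p. a i) = pf_part p q 2 1"
    unfolding a_def pf_part_def by simp
  also have "(\<Sum>i=1..p. (1 + (-1)^i) * (a i * zeta_nat i * zeta_nat (p + q - i)))
    = 2 * (\<Sum>j=1..p div 2. pf_coeff p q (2*j) / 2^(p + q - 2*j) * zeta_nat (2*j) * zeta_nat (p + q - 2*j))"
    unfolding a_def by (rule sum_one_plus_neg_one_power)
  finally show ?thesis unfolding Z_def by (simp add: algebra_simps)
qed

lemma zeta_product_sum_from_zero:
  "(\<Sum>j=0..p div 2. 1 / 2^(p + q - 2*j) * real ((p + q - 1 - 2*j) choose (q - 1))
      * zeta_nat (2*j) * zeta_nat (p + q - 2*j))
    = (\<Sum>j=1..p div 2. pf_coeff p q (2*j) / 2^(p + q - 2*j) * zeta_nat (2*j) * zeta_nat (p + q - 2*j))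
      - zeta_nat (p + q) * real (p + q - 1 choose (q - 1)) / 2^(p + q) / 2"
  by (simp add: sum.atLeast_Suc_atMost zeta_nat_def pf_coeff_def mult_ac)

theorem theorem6p4:
  fixes p q :: nat
  assumes "p \<ge> 2" and "q \<ge> 2"
  shows "(1 + (-1)^p) * zeta2_sharp p q + (1 + (-1)^q) * zeta2_sharp q p =
    2 * (\<Sum>j=0..p div 2. 1 / 2 ^ (p + q - 2*j) * real ((p + q - 1 - 2*j) choose (q - 1))
            * zeta_nat (2*j) * zeta_nat (p + q - 2*j))
  + 2 * (\<Sum>j=0..q div 2. 1 / 2 ^ (p + q - 2*j) * real ((p + q - 1 - 2*j) choose (p - 1))
            * zeta_nat (2*j) * zeta_nat (p + q - 2*j))
  - zeta_nat (p + q)"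
proof -
  have pq: "1 \<le> p" "1 \<le> q" using assms by auto
  have "zeta_nat (p + q) * pf_part p q 2 1 + zeta_nat (p + q) * pf_part q p 2 1 = zeta_nat (p + q)"
    using pf_part_two_one[OF pq] by (simp flip: distrib_left)
  with pf_total_eq[OF pq] pf_total_eq[OF pq(2,1), unfolded add.commute[of q p]]
    zeta_product_sum_from_zero[of p q] zeta_product_sum_from_zero[of q p, unfolded add.commute[of q p]]
  show ?thesis unfolding zeta2_sharp_parity_sum_eq_pf_total[OF assms] by argo
qed

end
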